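(* Let $n,k,\delta,\alpha$ be positive integers with $1\le\delta\le k$, $\delta+k\le n$ and $\alpha\ge2$. Then $$\mathcal B_q(n,k,\delta;\alpha)\ge(\alpha-1)\,q^{\max\{k,n-k\}(\min\{k,n-k\}-\delta+1)}.$$
   Context: An $\alpha$-$(n,k,\delta)_q^c$ covering Grassmannian code is a finite multiset of $k$-dimensional subspaces of $\mathbb F_q^n$ such that any $\alpha$ of its elements (taken with distinct indices) span a subspace of dimension at least $k+\delta$. $\mathcal B_q(n,k,\delta;\alpha)$ denotes the maximum size of such a code. *)

theory Defs
  imports Complex_Main "HOL-Library.Function_Algebras" "HOL-Library.Cardinality"
begin

text \<open>The ambient space F_q^n is modelled as the functions v :: nat => 'a (with 'a a finite
field, q = CARD('a)) that vanish at every index i >= n.  Scalar multiplication is pointwise.\<close>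

definition fscale :: "'a::field \<Rightarrow> (nat \<Rightarrow> 'a) \<Rightarrow> (nat \<Rightarrow> 'a)" where
  "fscale c v = (\<lambda>i. c * v i)"

definition ambient :: "nat \<Rightarrow> (nat \<Rightarrow> 'a::field) set" where
  "ambient n = {v. \<forall>i\<ge>n. v i = 0}"

definition vdim :: "(nat \<Rightarrow> 'a::field) set \<Rightarrow> nat" where
  "vdim S = vector_space.dim fscale S"

definition is_k_subspace :: "nat \<Rightarrow> nat \<Rightarrow> (nat \<Rightarrow> 'a::field) set \<Rightarrow> bool" where
  "is_k_subspace n k U \<longleftrightarrow> U \<subseteq> ambient n \<and> module.subspace fscale U \<and> vdim U = k"

text \<open>A covering Grassmannian code of size m, given as an indexed family (i.e. a multiset)
C 0, ..., C (m-1) of k-subspaces of F_q^n: any alpha members with distinct indices span a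
subspace of dimension at least k + delta.\<close>
definition covering_code ::
  "nat \<Rightarrow> nat \<Rightarrow> nat \<Rightarrow> nat \<Rightarrow> nat \<Rightarrow> (nat \<Rightarrow> (nat \<Rightarrow> 'a::field) set) \<Rightarrow> bool" where
  "covering_code n k \<delta> \<alpha> m C \<longleftrightarrow>
     (\<forall>i<m. is_k_subspace n k (C i)) \<and>
     (\<forall>I. I \<subseteq> {..<m} \<and> card I = \<alpha> \<longrightarrow> vdim (\<Union>i\<in>I. C i) \<ge> k + \<delta>)"

definition B_q :: "'a::{finite,field} itself \<Rightarrow> nat \<Rightarrow> nat \<Rightarrow> nat \<Rightarrow> nat \<Rightarrow> nat" where
  "B_q TYPE('a) n k \<delta> \<alpha> =
     Sup {m. \<exists>C :: nat \<Rightarrow> (nat \<Rightarrow> 'a) set. covering_code n k \<delta> \<alpha> m C}"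

end

theory Submission
  imports Defs "HOL-Algebra.Algebraic_Closure_Type"
begin

text \<open>Let \<open>N = max k (n - k)\<close> and \<open>K = min k (n - k) - \<delta> + 1\<close>. In the algebraic closure of
  \<open>F\<^sub>q\<close> the roots of \<open>X\<^sup>q\<^sup>N - X\<close> form a field \<open>E\<close> with \<open>q\<^sup>N\<close> elements, and for
  \<open>h \<in> E\<^sup>K\<close> the linearised polynomial \<open>L\<^sub>h y = \<Sum>i<K. h\<^sub>i y\<^sup>q\<^sup>i\<close> is
  \<open>F\<^sub>q\<close>-linear. Identifying \<open>F\<^sub>q\<^sup>k\<close> with part of \<open>E\<close> and keeping \<open>n - k\<close> coordinates of
  \<open>L\<^sub>h x\<close> gives a linear map \<open>\<Phi>\<^sub>h\<close>, whose graph \<open>{(x, \<Phi>\<^sub>h x)}\<close> is a \<open>k\<close>-subspace of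
  \<open>F\<^sub>q\<^sup>n\<close> (a lifted Gabidulin codeword). For \<open>g \<noteq> h\<close> the polynomial \<open>L\<^sub>g\<^sub>-\<^sub>h\<close> has at
  most \<open>q\<^sup>K\<^sup>-\<^sup>1\<close> roots, which forces \<open>\<Phi>\<^sub>g\<^sub>-\<^sub>h\<close> to have rank at least \<open>\<delta>\<close>; hence two
  distinct graphs span at least \<open>k + \<delta>\<close> dimensions. Repeating each of the \<open>q\<^sup>N\<^sup>K\<close> graphs
  \<open>\<alpha> - 1\<close> times yields a code, since any \<open>\<alpha>\<close> members contain two distinct graphs.\<close>

section \<open>Linear combinations over a subfield\<close>

definition lin_comb :: "'b::field list \<Rightarrow> (nat \<Rightarrow> 'b) \<Rightarrow> 'b" where
  "lin_comb bs c = (\<Sum>i<length bs. c i * bs ! i)"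

lemma lin_comb_cong: "(\<And>i. i < length bs \<Longrightarrow> c i = c' i) \<Longrightarrow> lin_comb bs c = lin_comb bs c'"
  unfolding lin_comb_def by (rule sum.cong) auto

lemma lin_comb_snoc: "lin_comb (bs @ [x]) c = lin_comb bs c + c (length bs) * x"
  unfolding lin_comb_def by (simp add: nth_append)

lemma sum_mem_closed:
  assumes "0 \<in> G" "\<And>x y. x \<in> G \<Longrightarrow> y \<in> G \<Longrightarrow> x + y \<in> G" "\<And>i. i \<in> I \<Longrightarrow> t i \<in> G"
  shows "sum t I \<in> G"
  using assms(3) by (induction I rule: infinite_finite_induct) (auto intro: assms(1,2))

lemma lin_comb_mem:
  assumes "set bs \<subseteq> G" "0 \<in> G" "\<And>x y. x \<in> G \<Longrightarrow> y \<in> G \<Longrightarrow> x + y \<in> G"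
    and "\<And>c x. c \<in> F \<Longrightarrow> x \<in> G \<Longrightarrow> c * x \<in> G" and "c \<in> PiE {..<length bs} (\<lambda>_. F)"
  shows "lin_comb bs c \<in> G"
  unfolding lin_comb_def
proof (rule sum_mem_closed)
  fix i assume "i \<in> {..<length bs}"
  then have "c i \<in> F" "bs ! i \<in> G" using assms(1,5) nth_mem by (auto simp: PiE_iff)
  then show "c i * bs ! i \<in> G" using assms(4) by blast
qed (use assms in auto)

lemma inj_on_lin_comb_snoc:
  fixes F :: "'b::field set"
  assumes F: "\<And>x y. x \<in> F \<Longrightarrow> y \<in> F \<Longrightarrow> x - y \<in> F"
    "\<And>x y. x \<in> F \<Longrightarrow> y \<in> F \<Longrightarrow> x * y \<in> F" "\<And>x. x \<in> F \<Longrightarrow> inverse x \<in> F"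
  assumes inj: "inj_on (lin_comb bs) (PiE {..<length bs} (\<lambda>_. F))"
    and x: "x \<notin> lin_comb bs ` PiE {..<length bs} (\<lambda>_. F)"
  shows "inj_on (lin_comb (bs @ [x])) (PiE {..<length (bs @ [x])} (\<lambda>_. F))"
proof (rule inj_onI)
  let ?l = "length bs"
  fix c c' assume c: "c \<in> PiE {..<length (bs @ [x])} (\<lambda>_. F)"
    and c': "c' \<in> PiE {..<length (bs @ [x])} (\<lambda>_. F)"
    and eq: "lin_comb (bs @ [x]) c = lin_comb (bs @ [x]) c'"
  have restrict: "restrict d {..<?l} \<in> PiE {..<?l} (\<lambda>_. F) \<and>
      lin_comb bs (restrict d {..<?l}) = lin_comb bs d"
    if "d \<in> PiE {..<length (bs @ [x])} (\<lambda>_. F)" for d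
    using that by (auto simp: PiE_iff intro: lin_comb_cong)
  have eq': "lin_comb bs c + c ?l * x = lin_comb bs c' + c' ?l * x"
    using eq by (simp add: lin_comb_snoc)
  have last: "c ?l = c' ?l"
  proof (rule ccontr)
    assume ne: "c ?l \<noteq> c' ?l"
    define e where "e = restrict (\<lambda>i. (c' i - c i) * inverse (c ?l - c' ?l)) {..<?l}"
    have "e \<in> PiE {..<?l} (\<lambda>_. F)"
      using c c' F unfolding e_def by (auto simp: PiE_iff)
    moreover have "lin_comb bs e = x"
    proof -
      have "x = (lin_comb bs c' - lin_comb bs c) * inverse (c ?l - c' ?l)"
        using eq' ne by (simp add: field_simps)
      also have "\<dots> = (\<Sum>i<?l. (c' i - c i) * bs ! i) * inverse (c ?l - c' ?l)"
        by (simp add: lin_comb_def sum_subtractf left_diff_distrib)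
      also have "\<dots> = lin_comb bs e"
        unfolding lin_comb_def e_def sum_distrib_right by (rule sum.cong) (simp_all add: ac_simps)
      finally show ?thesis by simp
    qed
    ultimately show False using x by blast
  qed
  with eq' have "lin_comb bs c = lin_comb bs c'" by simp
  with restrict[OF c] restrict[OF c']
  have "restrict c {..<?l} = restrict c' {..<?l}" by (intro inj_onD[OF inj]) auto
  then show "c = c'"
    using last by (intro PiE_ext[OF c c'])
      (metis lessThan_iff less_Suc_eq restrict_apply' length_append_singleton)
qed

text \<open>A greedy argument: a longest list whose combinations are injective spans all of \<open>G\<close>.\<close>

lemma exists_lin_comb_bij:
  fixes F G :: "'b::field set"
  assumes F: "finite F" "0 \<in> F" "1 \<in> F" "\<And>x y. x \<in> F \<Longrightarrow> y \<in> F \<Longrightarrow> x - y \<in> F"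
    "\<And>x y. x \<in> F \<Longrightarrow> y \<in> F \<Longrightarrow> x * y \<in> F" "\<And>x. x \<in> F \<Longrightarrow> inverse x \<in> F"
  assumes G: "finite G" "0 \<in> G" "\<And>x y. x \<in> G \<Longrightarrow> y \<in> G \<Longrightarrow> x + y \<in> G"
    "\<And>c x. c \<in> F \<Longrightarrow> x \<in> G \<Longrightarrow> c * x \<in> G"
  shows "\<exists>bs. bij_betw (lin_comb bs) (PiE {..<length bs} (\<lambda>_. F)) G"
proof -
  define P where "P bs \<longleftrightarrow> set bs \<subseteq> G \<and> inj_on (lin_comb bs) (PiE {..<length bs} (\<lambda>_. F))"
    for bs
  have into_G: "lin_comb bs ` PiE {..<length bs} (\<lambda>_. F) \<subseteq> G" if "set bs \<subseteq> G" for bs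
    using that G lin_comb_mem[of bs G F] by blast
  have "card {0 :: 'b, 1} \<le> card F"
    using F by (intro card_mono) auto
  then have two_le_F: "2 \<le> card F" by simp
  have length_bound: "length bs < card G + 1" if "P bs" for bs
  proof -
    have "length bs < 2 ^ length bs" by (rule less_exp)
    also have "\<dots> \<le> card F ^ length bs" using two_le_F by (intro power_mono) auto
    also have "\<dots> = card (lin_comb bs ` PiE {..<length bs} (\<lambda>_. F))"
      using that unfolding P_def by (simp add: card_image card_PiE)
    also have "\<dots> \<le> card G"
      using that G(1) into_G unfolding P_def by (intro card_mono) auto
    finally show ?thesis by simp
  qed
  have "P []" unfolding P_def by (auto simp: inj_on_def)
  then obtain bs where bs: "P bs" and longest: "\<And>bs'. P bs' \<Longrightarrow> length bs' \<le> length bs"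
    using ex_has_greatest_nat[of P "[]" length "card G + 1"] length_bound by blast
  have "G \<subseteq> lin_comb bs ` PiE {..<length bs} (\<lambda>_. F)"
  proof
    fix x assume "x \<in> G"
    show "x \<in> lin_comb bs ` PiE {..<length bs} (\<lambda>_. F)"
    proof (rule ccontr)
      assume "x \<notin> lin_comb bs ` PiE {..<length bs} (\<lambda>_. F)"
      with bs \<open>x \<in> G\<close> have "P (bs @ [x])"
        unfolding P_def using inj_on_lin_comb_snoc[OF F(4-6)] by auto
      then show False using longest by fastforce
    qed
  qed
  with bs into_G show ?thesis
    unfolding P_def bij_betw_def by blast
qed

section \<open>Finite fields and the field with \<open>q\<^sup>N\<close> elements\<close>

lemma two_le_card_field: "2 \<le> CARD('a::{finite,field})"
proof -
  have "card {0 :: 'a, 1} \<le> CARD('a)" by (rule card_mono) auto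
  then show ?thesis by simp
qed

lemma power_card_eq_self:
  fixes x :: "'a::{finite,field}"
  shows "x ^ CARD('a) = x"
proof (cases "x = 0")
  case True
  then show ?thesis using two_le_card_field[where 'a='a] by simp
next
  case False
  let ?U = "UNIV - {0 :: 'a}"
  have "bij_betw ((*) x) ?U ?U"
    using False by (intro bij_betwI[where g = "\<lambda>y. y / x"]) auto
  then have "(\<Prod>y\<in>?U. x * y) = \<Prod>?U"
    by (rule prod.reindex_bij_betw)
  moreover have "(\<Prod>y\<in>?U. x * y) = x ^ card ?U * \<Prod>?U"
    by (simp add: prod.distrib)
  moreover have "\<Prod>?U \<noteq> 0" by simp
  ultimately have "x ^ (CARD('a) - 1) = 1"
    by (simp add: card_Diff_singleton)
  moreover have "CARD('a) = Suc (CARD('a) - 1)"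
    using two_le_card_field[where 'a='a] by simp
  ultimately show ?thesis by (metis power_Suc mult_1_right)
qed

lemma power_card_power_eq_self: "x ^ (CARD('a) ^ i) = (x :: 'a::{finite,field})"
  by (induction i) (simp_all add: power_card_eq_self power_mult)

lemma inverse_eq_power_card:
  fixes x :: "'a::{finite,field}"
  assumes "x \<noteq> 0"
  shows "inverse x = x ^ (CARD('a) - 2)"
proof (rule inverse_unique)
  have "CARD('a) = Suc (Suc (CARD('a) - 2))"
    using two_le_card_field[where 'a='a] by simp
  then have "x * (x * x ^ (CARD('a) - 2)) = x * 1"
    using power_card_eq_self[of x] by (metis power_Suc mult_1_right)
  then show "x * x ^ (CARD('a) - 2) = 1"
    using assms by simp
qed

lemma card_range_of_int: "card (range (of_int :: int \<Rightarrow> 'a::{finite,field})) = CHAR('a)"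
proof -
  let ?p = "CHAR('a)"
  have p_pos: "0 < ?p" by (rule finite_imp_CHAR_pos) simp
  have of_int_eq: "of_int z = (of_nat (nat (z mod ?p)) :: 'a)" for z
  proof -
    have "(of_int (int ?p * (z div ?p)) :: 'a) = 0" by simp
    then have "(of_int z :: 'a) = of_int (z mod ?p)"
      by (metis add_0 div_mult_mod_eq mult.commute of_int_add)
    also have "\<dots> = of_nat (nat (z mod ?p))" using p_pos by simp
    finally show ?thesis .
  qed
  have "range (of_int :: int \<Rightarrow> 'a) = of_nat ` {..<?p}"
  proof (intro equalityI subsetI)
    fix y :: 'a assume "y \<in> range of_int"
    then obtain z where "y = of_int z" by blast
    moreover have "nat (z mod ?p) < ?p" using p_pos by (simp add: nat_less_iff)
    ultimately show "y \<in> of_nat ` {..<?p}" unfolding of_int_eq by blast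
  next
    fix y :: 'a assume "y \<in> of_nat ` {..<?p}"
    then show "y \<in> range of_int" by (metis imageE of_int_of_nat_eq rangeI)
  qed
  moreover have "inj_on (of_nat :: nat \<Rightarrow> 'a) {..<?p}"
  proof (rule linorder_inj_onI')
    fix a b assume "a \<in> {..<?p}" "b \<in> {..<?p}" "a < b"
    then have "0 < b - a" "b - a < ?p" by auto
    then have "\<not> ?p dvd b - a" using nat_dvd_not_less by blast
    with \<open>a < b\<close> show "(of_nat a :: 'a) \<noteq> of_nat b"
      by (simp add: of_nat_eq_iff_char_dvd)
  qed
  ultimately show ?thesis by (simp add: card_image)
qed

lemma prime_CHAR_finite_field: "prime CHAR('a::{finite,field})"
  using finite_imp_CHAR_pos[where 'a='a] prime_CHAR_semidom by auto

text \<open>The field is a vector space over its prime field \<open>range of_int\<close>.\<close>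

lemma card_eq_CHAR_power: "\<exists>r. CARD('a::{finite,field}) = CHAR('a) ^ r"
proof -
  let ?F = "range (of_int :: int \<Rightarrow> 'a)"
  have "\<exists>bs. bij_betw (lin_comb bs) (PiE {..<length bs} (\<lambda>_. ?F)) UNIV"
  proof (rule exists_lin_comb_bij)
    show "0 \<in> ?F" "1 \<in> ?F" by (metis of_int_0 rangeI, metis of_int_1 rangeI)
    show "x - y \<in> ?F" "x * y \<in> ?F" if "x \<in> ?F" "y \<in> ?F" for x y
      using that by (auto simp flip: of_int_diff of_int_mult)
    show "inverse x \<in> ?F" if "x \<in> ?F" for x
    proof (cases "x = 0")
      case False
      with that show ?thesis
        by (auto simp: inverse_eq_power_card simp flip: of_int_power)
    qed (metis inverse_zero of_int_0 rangeI)
  qed simp_all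
  then obtain bs where "bij_betw (lin_comb bs) (PiE {..<length bs} (\<lambda>_. ?F)) UNIV" ..
  then have "card (PiE {..<length bs} (\<lambda>_. ?F)) = CARD('a)" by (rule bij_betw_same_card)
  then have "CARD('a) = card ?F ^ length bs" by (simp add: card_PiE)
  then show ?thesis by (auto simp: card_range_of_int)
qed

lemma card_power_eq_CHAR_power: "\<exists>r. CARD('a::{finite,field}) ^ i = CHAR('a alg_closure) ^ r"
  using card_eq_CHAR_power[where 'a='a] by (auto simp flip: power_mult)

lemma frobenius_add:
  fixes x y :: "'a::{finite,field} alg_closure"
  shows "(x + y) ^ (CARD('a) ^ i) = x ^ (CARD('a) ^ i) + y ^ (CARD('a) ^ i)"
proof -
  obtain r where "CARD('a) ^ i = CHAR('a alg_closure) ^ r"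
    using card_power_eq_CHAR_power by blast
  then show ?thesis
    by (rule freshmans_dream'[rotated]) (simp add: prime_CHAR_finite_field)
qed

lemma frobenius_diff:
  fixes x y :: "'a::{finite,field} alg_closure"
  shows "(x - y) ^ (CARD('a) ^ i) = x ^ (CARD('a) ^ i) - y ^ (CARD('a) ^ i)"
  using frobenius_add[of "x - y" y i] by (simp add: eq_diff_eq)

lemma frobenius_to_ac: "to_ac (c :: 'a::{finite,field}) ^ (CARD('a) ^ i) = to_ac c"
  by (simp flip: to_ac_power add: power_card_power_eq_self)

lemma of_nat_card_power_eq_0:
  assumes "0 < i"
  shows "(of_nat (CARD('a::{finite,field}) ^ i) :: 'a alg_closure) = 0"
proof -
  obtain r where r: "CARD('a) = CHAR('a) ^ r" using card_eq_CHAR_power by blast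
  with two_le_card_field[where 'a='a] have "0 < r" by (cases r) auto
  then have "CHAR('a) dvd CARD('a)" unfolding r by (intro dvd_power) simp
  with assms show ?thesis by (simp add: of_nat_eq_0_iff_char_dvd)
qed

lemma card_roots_eq_degree:
  fixes P :: "'b::alg_closed_field poly"
  assumes "P \<noteq> 0" and separable: "\<And>x. poly P x = 0 \<Longrightarrow> poly (pderiv P) x \<noteq> 0"
  shows "card {x. poly P x = 0} = degree P"
proof -
  obtain A where A: "size A = degree P" "P = smult (lead_coeff P) (\<Prod>x\<in>#A. [:- x, 1:])"
    using alg_closed_imp_factorization[OF assms(1)] by blast
  have roots: "{x. poly P x = 0} = set_mset A"
    using assms(1) by (subst A(2)) (auto simp: poly_prod_mset prod_mset_zero_iff)
  have count_le_1: "count A x \<le> 1" for x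
  proof (rule ccontr)
    assume "\<not> count A x \<le> 1"
    define B where "B = A - {#x, x#}"
    have "A = add_mset x (add_mset x B)"
      unfolding B_def using \<open>\<not> count A x \<le> 1\<close> by (intro multiset_eqI) auto
    then have P_eq: "P = smult (lead_coeff P) ([:- x, 1:] * ([:- x, 1:] * (\<Prod>y\<in>#B. [:- y, 1:])))"
      using A(2) by (simp add: mult.assoc)
    have "poly P x = 0"
      by (subst P_eq, simp only: poly_smult poly_mult) simp
    moreover have "poly (pderiv P) x = 0"
      by (subst P_eq, simp only: pderiv_smult pderiv_mult poly_smult poly_mult poly_add) simp
    ultimately show False using separable by blast
  qed
  have "size A = (\<Sum>x\<in>set_mset A. count A x)"
    by (rule size_multiset_overloaded_eq)
  also have "\<dots> = (\<Sum>x\<in>set_mset A. 1)"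
  proof (rule sum.cong)
    fix x assume "x \<in># A"
    then show "count A x = 1" using count_le_1[of x] by (simp add: le_antisym Suc_le_eq)
  qed simp
  finally show ?thesis using A(1) roots by simp
qed

definition gf_ext :: "'a::{finite,field} itself \<Rightarrow> nat \<Rightarrow> 'a alg_closure set" where
  "gf_ext _ N = {x. x ^ (CARD('a) ^ N) = x}"

lemma gf_ext_add:
  "x \<in> gf_ext TYPE('a::{finite,field}) N \<Longrightarrow> y \<in> gf_ext TYPE('a) N \<Longrightarrow> x + y \<in> gf_ext TYPE('a) N"
  unfolding gf_ext_def by (simp add: frobenius_add)

lemma gf_ext_diff:
  "x \<in> gf_ext TYPE('a::{finite,field}) N \<Longrightarrow> y \<in> gf_ext TYPE('a) N \<Longrightarrow> x - y \<in> gf_ext TYPE('a) N"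
  unfolding gf_ext_def by (simp add: frobenius_diff)

lemma gf_ext_mult:
  "x \<in> gf_ext TYPE('a::{finite,field}) N \<Longrightarrow> y \<in> gf_ext TYPE('a) N \<Longrightarrow> x * y \<in> gf_ext TYPE('a) N"
  unfolding gf_ext_def by (simp add: power_mult_distrib)

lemma zero_in_gf_ext: "0 \<in> gf_ext TYPE('a::{finite,field}) N"
  unfolding gf_ext_def by simp

lemma to_ac_in_gf_ext: "to_ac c \<in> gf_ext TYPE('a::{finite,field}) N"
  unfolding gf_ext_def by (simp add: frobenius_to_ac)

lemma power_card_power_in_gf_ext:
  assumes "x \<in> gf_ext TYPE('a::{finite,field}) N"
  shows "x ^ (CARD('a) ^ i) \<in> gf_ext TYPE('a) N"
proof -
  have "(x ^ (CARD('a) ^ i)) ^ (CARD('a) ^ N) = (x ^ (CARD('a) ^ N)) ^ (CARD('a) ^ i)"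
    by (simp flip: power_mult add: mult.commute)
  with assms show ?thesis unfolding gf_ext_def by simp
qed

text \<open>\<open>X\<^sup>Q - X\<close> has derivative \<open>-1\<close> because \<open>Q = q\<^sup>N\<close> vanishes in characteristic \<open>p\<close>.\<close>

lemma card_gf_ext:
  assumes "0 < N"
  shows "card (gf_ext TYPE('a::{finite,field}) N) = CARD('a) ^ N"
proof -
  define Q where "Q = CARD('a) ^ N"
  have "CARD('a) ^ 1 \<le> Q"
    unfolding Q_def using assms two_le_card_field[where 'a='a] by (intro power_increasing) auto
  then have Q: "2 \<le> Q" using two_le_card_field[where 'a='a] by simp
  define P :: "'a alg_closure poly" where "P = monom 1 Q + monom (-1) 1"
  have degree: "degree P = Q"
    unfolding P_def using Q by (subst degree_add_eq_left) (simp_all add: degree_monom_eq)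
  have "of_nat Q = (0 :: 'a alg_closure)"
    unfolding Q_def using assms by (rule of_nat_card_power_eq_0)
  then have "poly (pderiv P) x = -1" for x
    by (simp add: P_def pderiv_add pderiv_monom poly_monom)
  moreover have "P \<noteq> 0" using degree Q by auto
  ultimately have "card {x. poly P x = 0} = degree P"
    by (intro card_roots_eq_degree) auto
  moreover have "gf_ext TYPE('a) N = {x. poly P x = 0}"
    by (simp add: gf_ext_def P_def poly_monom Q_def)
  ultimately show ?thesis using degree Q_def by simp
qed

lemma finite_gf_ext: "0 < N \<Longrightarrow> finite (gf_ext TYPE('a::{finite,field}) N)"
  using card_gf_ext[of N, where 'a='a] by (intro card_ge_0_finite) simp

section \<open>Subspaces of \<open>F\<^sub>q\<^sup>n\<close>\<close>

lemma vector_space_fscale: "vector_space (fscale :: 'a::field \<Rightarrow> (nat \<Rightarrow> 'a) \<Rightarrow> _)"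
  by unfold_locales (simp_all add: fscale_def fun_eq_iff algebra_simps)

lemma bij_betw_restrict_vanishing_outside:
  "bij_betw (\<lambda>x. restrict x S) {x :: nat \<Rightarrow> 'a::zero. \<forall>i. i \<notin> S \<longrightarrow> x i = 0} (PiE S (\<lambda>_. UNIV))"
  by (rule bij_betw_byWitness[where f' = "\<lambda>y i. if i \<in> S then y i else 0"])
    (auto simp: fun_eq_iff PiE_def extensional_def)

lemma
  assumes "finite S"
  shows finite_vanishing_outside: "finite {x :: nat \<Rightarrow> 'a::{finite,zero}. \<forall>i. i \<notin> S \<longrightarrow> x i = 0}"
    and card_vanishing_outside:
      "card {x :: nat \<Rightarrow> 'a::{finite,zero}. \<forall>i. i \<notin> S \<longrightarrow> x i = 0} = CARD('a) ^ card S"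
proof -
  note bij = bij_betw_restrict_vanishing_outside[of S, where 'a='a]
  show "finite {x :: nat \<Rightarrow> 'a. \<forall>i. i \<notin> S \<longrightarrow> x i = 0}"
    using bij_betw_finite[OF bij] assms by (simp add: finite_PiE)
  show "card {x :: nat \<Rightarrow> 'a. \<forall>i. i \<notin> S \<longrightarrow> x i = 0} = CARD('a) ^ card S"
    using bij_betw_same_card[OF bij] assms by (simp add: card_PiE)
qed

lemma ambient_eq_vanishing_outside: "ambient n = {x. \<forall>i. i \<notin> {..<n} \<longrightarrow> x i = 0}"
  unfolding ambient_def by auto

lemma finite_ambient: "finite (ambient n :: (nat \<Rightarrow> 'a::{finite,field}) set)"
  unfolding ambient_eq_vanishing_outside by (rule finite_vanishing_outside) simp

lemma card_ambient: "card (ambient n :: (nat \<Rightarrow> 'a::{finite,field}) set) = CARD('a) ^ n"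
  unfolding ambient_eq_vanishing_outside using card_vanishing_outside[of "{..<n}"] by simp

lemma ambient_mono: "k \<le> n \<Longrightarrow> ambient k \<subseteq> ambient n"
  unfolding ambient_def by auto

lemma zero_in_ambient: "0 \<in> ambient n"
  unfolding ambient_def by simp

lemma ambient_add: "x \<in> ambient n \<Longrightarrow> y \<in> ambient n \<Longrightarrow> x + y \<in> ambient n"
  and ambient_diff: "x \<in> ambient n \<Longrightarrow> y \<in> ambient n \<Longrightarrow> x - y \<in> ambient n"
  and ambient_fscale: "x \<in> ambient n \<Longrightarrow> fscale c x \<in> ambient n"
  unfolding ambient_def fscale_def by auto

lemma subspace_ambient: "module.subspace (fscale :: 'a::field \<Rightarrow> _) (ambient n)"
proof -
  interpret vector_space "fscale :: 'a \<Rightarrow> (nat \<Rightarrow> 'a) \<Rightarrow> _" by (rule vector_space_fscale)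
  show ?thesis unfolding subspace_def ambient_def by (auto simp: fscale_def)
qed

lemma card_span_independent:
  fixes scale :: "'a::{finite,field} \<Rightarrow> 'v::ab_group_add \<Rightarrow> 'v"
  assumes "vector_space scale" "finite B" "\<not> module.dependent scale B"
  shows "card (module.span scale B) = CARD('a) ^ card B"
proof -
  interpret vector_space scale by fact
  define f where "f u = (\<Sum>v\<in>B. scale (u v) v)" for u
  have "span B = range f"
    unfolding f_def by (rule span_finite[OF assms(2)])
  also have "\<dots> = f ` PiE B (\<lambda>_. UNIV)"
  proof (intro equalityI subsetI)
    fix y assume "y \<in> range f"
    then obtain u where "y = f u" by blast
    moreover have "f u = f (restrict u B)" unfolding f_def by (rule sum.cong) auto
    ultimately show "y \<in> f ` PiE B (\<lambda>_. UNIV)" by force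
  qed auto
  finally have span: "span B = f ` PiE B (\<lambda>_. UNIV)" .
  have "inj_on f (PiE B (\<lambda>_. UNIV))"
  proof (rule inj_onI)
    fix u u' assume u: "u \<in> PiE B (\<lambda>_. UNIV)" and u': "u' \<in> PiE B (\<lambda>_. UNIV)" and "f u = f u'"
    have "(\<Sum>v\<in>B. scale (u v - u' v) v) = f u - f u'"
      unfolding f_def by (simp add: sum_subtractf[symmetric] scale_left_diff_distrib)
    also have "\<dots> = 0" using \<open>f u = f u'\<close> by simp
    finally have "(\<Sum>v\<in>B. scale (u v - u' v) v) = 0" .
    have "\<forall>v\<in>B. u v - u' v = 0"
    proof (rule ccontr)
      assume "\<not> ?thesis"
      with \<open>(\<Sum>v\<in>B. scale (u v - u' v) v) = 0\<close> have "dependent B"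
        unfolding dependent_finite[OF assms(2)] by (intro exI[of _ "\<lambda>v. u v - u' v"]) blast
      with assms(3) show False by contradiction
    qed
    then show "u = u'" by (intro PiE_ext[OF u u']) simp
  qed
  then show ?thesis
    using assms(2) by (simp add: span card_image card_PiE)
qed

lemma card_span_eq_power_vdim:
  fixes S :: "(nat \<Rightarrow> 'a::{finite,field}) set"
  assumes "S \<subseteq> ambient n"
  shows "finite (module.span fscale S)" and "card (module.span fscale S) = CARD('a) ^ vdim S"
proof -
  interpret vector_space "fscale :: 'a \<Rightarrow> (nat \<Rightarrow> 'a) \<Rightarrow> _" by (rule vector_space_fscale)
  have span_sub: "span S \<subseteq> ambient n" using span_minimal[OF assms subspace_ambient] .
  then show "finite (span S)" by (rule finite_subset[OF _ finite_ambient])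
  obtain B where B: "B \<subseteq> span S" "independent B" "span S \<subseteq> span B" "card B = dim (span S)"
    by (rule basis_exists)
  have "finite B" using B(1) span_sub by (intro finite_subset[OF _ finite_ambient]) auto
  moreover have "span B = span S"
    using B(1,3) span_minimal[OF B(1) subspace_span] by blast
  ultimately show "card (span S) = CARD('a) ^ vdim S"
    using card_span_independent[OF vector_space_fscale \<open>finite B\<close> B(2)] B(4)
    by (simp add: vdim_def)
qed

lemma vdim_mono:
  fixes S :: "(nat \<Rightarrow> 'a::{finite,field}) set"
  assumes "T \<subseteq> S" "S \<subseteq> ambient n"
  shows "vdim T \<le> vdim S"
proof -
  interpret vector_space "fscale :: 'a \<Rightarrow> (nat \<Rightarrow> 'a) \<Rightarrow> _" by (rule vector_space_fscale)
  have "card (span T) \<le> card (span S)"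
    using assms card_span_eq_power_vdim(1)[OF assms(2)] by (intro card_mono span_mono)
  moreover have "T \<subseteq> ambient n" using assms by blast
  ultimately have "CARD('a) ^ vdim T \<le> CARD('a) ^ vdim S"
    by (simp add: card_span_eq_power_vdim(2)[OF assms(2)] card_span_eq_power_vdim(2)[of T n])
  then show ?thesis using two_le_card_field[where 'a='a] by simp
qed

lemma vdim_ge_if_card_ge:
  fixes S :: "(nat \<Rightarrow> 'a::{finite,field}) set"
  assumes "S \<subseteq> ambient n" "T \<subseteq> module.span fscale S" "CARD('a) ^ d \<le> card T"
  shows "d \<le> vdim S"
proof -
  have "card T \<le> card (module.span fscale S)"
    using card_span_eq_power_vdim(1)[OF assms(1)] assms(2) by (rule card_mono)
  then have "CARD('a) ^ d \<le> CARD('a) ^ vdim S"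
    using assms(3) card_span_eq_power_vdim(2)[OF assms(1)] by simp
  then show ?thesis using two_le_card_field[where 'a='a] by simp
qed

lemma vdim_subspace:
  fixes U :: "(nat \<Rightarrow> 'a::{finite,field}) set"
  assumes "U \<subseteq> ambient n" "module.subspace fscale U" "card U = CARD('a) ^ k"
  shows "vdim U = k"
proof -
  interpret vector_space "fscale :: 'a \<Rightarrow> (nat \<Rightarrow> 'a) \<Rightarrow> _" by (rule vector_space_fscale)
  have "span U = U" using assms(2) by simp
  then have "CARD('a) ^ vdim U = CARD('a) ^ k"
    using card_span_eq_power_vdim(2)[OF assms(1)] assms(3) by metis
  then show ?thesis using two_le_card_field[where 'a='a] by simp
qed

section \<open>Coordinates over \<open>F\<^sub>q\<close> and linearised polynomials\<close>

locale gf_ext_basis =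
  fixes N :: nat and bs :: "'a::{finite,field} alg_closure list"
  assumes length_bs: "length bs = N"
    and bij_lin_comb: "bij_betw (lin_comb bs) (PiE {..<N} (\<lambda>_. range to_ac)) (gf_ext TYPE('a) N)"
begin

abbreviation E :: "'a alg_closure set" where "E \<equiv> gf_ext TYPE('a) N"

definition embed :: "(nat \<Rightarrow> 'a) \<Rightarrow> 'a alg_closure" where
  "embed x = lin_comb bs (\<lambda>i. to_ac (x i))"

definition coords :: "'a alg_closure \<Rightarrow> nat \<Rightarrow> 'a" where
  "coords e i =
    (if i < N then of_ac (inv_into (PiE {..<N} (\<lambda>_. range to_ac)) (lin_comb bs) e i) else 0)"

lemma embed_eq_lin_comb_restrict: "embed x = lin_comb bs (restrict (\<lambda>i. to_ac (x i)) {..<N})"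
  unfolding embed_def by (rule lin_comb_cong) (simp add: length_bs)

lemma restrict_to_ac_in_PiE: "restrict (\<lambda>i. to_ac (x i)) {..<N} \<in> PiE {..<N} (\<lambda>_. range to_ac)"
  by (simp add: restrict_PiE_iff)

lemma embed_in_gf_ext: "embed x \<in> E"
  using bij_lin_comb restrict_to_ac_in_PiE unfolding embed_eq_lin_comb_restrict bij_betw_def
  by blast

lemma embed_add: "embed (x + y) = embed x + embed y"
  unfolding embed_def lin_comb_def by (simp add: sum.distrib distrib_right)

lemma embed_diff: "embed (x - y) = embed x - embed y"
  unfolding embed_def lin_comb_def by (simp add: sum_subtractf left_diff_distrib)

lemma embed_fscale: "embed (fscale c x) = to_ac c * embed x"
  unfolding embed_def lin_comb_def fscale_def by (simp add: sum_distrib_left mult.assoc)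

lemma coords_embed:
  assumes "x \<in> ambient N"
  shows "coords (embed x) = x"
proof
  fix i
  have "inv_into (PiE {..<N} (\<lambda>_. range to_ac)) (lin_comb bs) (embed x) =
      restrict (\<lambda>i. to_ac (x i)) {..<N}"
    unfolding embed_eq_lin_comb_restrict
    by (rule inv_into_f_f[OF bij_betw_imp_inj_on[OF bij_lin_comb] restrict_to_ac_in_PiE])
  then show "coords (embed x) i = x i"
    using assms unfolding coords_def ambient_def by auto
qed

lemma embed_coords:
  assumes "e \<in> E"
  shows "embed (coords e) = e"
proof -
  let ?c = "inv_into (PiE {..<N} (\<lambda>_. range to_ac)) (lin_comb bs) e"
  have c: "?c \<in> PiE {..<N} (\<lambda>_. range to_ac)"
    using bij_betw_apply[OF bij_betw_inv_into[OF bij_lin_comb] assms] .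
  moreover have "lin_comb bs ?c = e"
    using bij_betw_inv_into_right[OF bij_lin_comb assms] .
  moreover have "embed (coords e) = lin_comb bs ?c"
    unfolding embed_def
  proof (rule lin_comb_cong)
    fix i assume "i < length bs"
    with c have "i < N" "?c i \<in> range to_ac" by (auto simp: length_bs)
    then show "to_ac (coords e i) = ?c i"
      unfolding coords_def by (simp add: to_ac_of_ac)
  qed
  ultimately show ?thesis by simp
qed

lemma coords_in_ambient: "coords e \<in> ambient N"
  unfolding coords_def ambient_def by simp

lemma inj_on_embed: "inj_on embed (ambient N)"
  by (metis coords_embed inj_on_inverseI)

lemma coords_diff:
  assumes "e \<in> E" "e' \<in> E"
  shows "coords (e - e') = coords e - coords e'"
proof -
  have "coords (e - e') = coords (embed (coords e - coords e'))"
    using assms by (simp add: embed_diff embed_coords)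
  also have "\<dots> = coords e - coords e'"
    by (intro coords_embed ambient_diff coords_in_ambient)
  finally show ?thesis .
qed

lemma coords_add:
  assumes "e \<in> E" "e' \<in> E"
  shows "coords (e + e') = coords e + coords e'"
proof -
  have "coords (e + e') = coords (embed (coords e + coords e'))"
    using assms by (simp add: embed_add embed_coords)
  also have "\<dots> = coords e + coords e'"
    by (intro coords_embed ambient_add coords_in_ambient)
  finally show ?thesis .
qed

lemma coords_scale:
  assumes "e \<in> E"
  shows "coords (to_ac c * e) = fscale c (coords e)"
proof -
  have "coords (to_ac c * e) = coords (embed (fscale c (coords e)))"
    using assms by (simp add: embed_fscale embed_coords)
  also have "\<dots> = fscale c (coords e)"
    by (intro coords_embed ambient_fscale coords_in_ambient)
  finally show ?thesis .
qed

lemma finite_E: "finite E"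
  using bij_betw_finite[OF bij_lin_comb] by (simp add: finite_PiE)

lemma card_coords_vanishing_below:
  "card {e \<in> E. \<forall>j<m. coords e j = 0} \<le> CARD('a) ^ (N - m)"
proof -
  define Y where "Y = {x :: nat \<Rightarrow> 'a. \<forall>i. i \<notin> {m..<N} \<longrightarrow> x i = 0}"
  have "{e \<in> E. \<forall>j<m. coords e j = 0} \<subseteq> embed ` Y"
  proof
    fix e assume e: "e \<in> {e \<in> E. \<forall>j<m. coords e j = 0}"
    then have "coords e \<in> Y"
      using coords_in_ambient[of e] unfolding Y_def ambient_def by auto
    moreover have "e = embed (coords e)" using e embed_coords by simp
    ultimately show "e \<in> embed ` Y" by blast
  qed
  then have "card {e \<in> E. \<forall>j<m. coords e j = 0} \<le> card (embed ` Y)"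
    using finite_vanishing_outside[OF finite_atLeastLessThan[of m N]] unfolding Y_def
    by (intro card_mono) auto
  also have "\<dots> \<le> card Y"
    using finite_vanishing_outside[OF finite_atLeastLessThan[of m N]] unfolding Y_def
    by (rule card_image_le)
  also have "\<dots> = CARD('a) ^ (N - m)"
    unfolding Y_def using card_vanishing_outside[OF finite_atLeastLessThan[of m N]] by simp
  finally show ?thesis .
qed

end

lemma exists_gf_ext_basis:
  assumes "0 < N"
  shows "\<exists>bs :: 'a::{finite,field} alg_closure list. gf_ext_basis N bs"
proof -
  let ?F = "range (to_ac :: 'a \<Rightarrow> 'a alg_closure)"
  have "\<exists>bs. bij_betw (lin_comb bs) (PiE {..<length bs} (\<lambda>_. ?F)) (gf_ext TYPE('a) N)"
  proof (rule exists_lin_comb_bij)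
    show "0 \<in> ?F" "1 \<in> ?F" by (metis rangeI to_ac_0, metis rangeI to_ac_1)
    show "x - y \<in> ?F" "x * y \<in> ?F" if "x \<in> ?F" "y \<in> ?F" for x y
      using that by (auto simp flip: to_ac_diff to_ac_mult)
    show "inverse x \<in> ?F" if "x \<in> ?F" for x
      using that by (auto simp flip: to_ac_inverse)
    show "c * x \<in> gf_ext TYPE('a) N" if "c \<in> ?F" "x \<in> gf_ext TYPE('a) N" for c x
      using that gf_ext_mult to_ac_in_gf_ext by blast
  qed (simp_all add: finite_gf_ext[OF assms] zero_in_gf_ext gf_ext_add)
  then obtain bs
    where bij: "bij_betw (lin_comb bs) (PiE {..<length bs} (\<lambda>_. ?F)) (gf_ext TYPE('a) N)" ..
  then have "card (PiE {..<length bs} (\<lambda>_. ?F)) = CARD('a) ^ N"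
    using card_gf_ext[OF assms] by (metis bij_betw_same_card)
  then have "CARD('a) ^ length bs = CARD('a) ^ N"
    by (simp add: card_PiE card_image inj_to_ac)
  then have "length bs = N"
    using two_le_card_field[where 'a='a] by simp
  with bij have "gf_ext_basis N bs" by unfold_locales auto
  then show ?thesis ..
qed

definition lin_poly ::
    "nat \<Rightarrow> (nat \<Rightarrow> 'a::{finite,field} alg_closure) \<Rightarrow> 'a alg_closure \<Rightarrow> 'a alg_closure" where
  "lin_poly K h y = (\<Sum>i<K. h i * y ^ (CARD('a) ^ i))"

lemma lin_poly_add: "lin_poly K h (y + z) = lin_poly K h y + lin_poly K h z"
  unfolding lin_poly_def by (simp add: frobenius_add distrib_left sum.distrib)

lemma lin_poly_diff: "lin_poly K h (y - z) = lin_poly K h y - lin_poly K h z"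
  unfolding lin_poly_def by (simp add: frobenius_diff right_diff_distrib sum_subtractf)

lemma lin_poly_scale: "lin_poly K h (to_ac c * y) = to_ac c * lin_poly K h y"
  unfolding lin_poly_def by (simp add: power_mult_distrib frobenius_to_ac sum_distrib_left ac_simps)

lemma lin_poly_diff_coeffs: "lin_poly K (\<lambda>i. g i - h i) y = lin_poly K g y - lin_poly K h y"
  unfolding lin_poly_def by (simp add: left_diff_distrib sum_subtractf)

lemma lin_poly_in_gf_ext:
  assumes "\<And>i. i < K \<Longrightarrow> h i \<in> gf_ext TYPE('a::{finite,field}) N" "y \<in> gf_ext TYPE('a) N"
  shows "lin_poly K h y \<in> gf_ext TYPE('a) N"
  unfolding lin_poly_def
  by (rule sum_mem_closed)
    (use assms in \<open>auto intro: zero_in_gf_ext gf_ext_add gf_ext_mult power_card_power_in_gf_ext\<close>)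

text \<open>A nonzero linearised polynomial with \<open>K\<close> coefficients has degree at most \<open>q\<^sup>K\<^sup>-\<^sup>1\<close>.\<close>

lemma card_lin_poly_roots:
  fixes h :: "nat \<Rightarrow> 'a::{finite,field} alg_closure"
  assumes "i0 < K" "h i0 \<noteq> 0"
  shows "finite {y. lin_poly K h y = 0}" and "card {y. lin_poly K h y = 0} \<le> CARD('a) ^ (K - 1)"
proof -
  define P where "P = (\<Sum>i<K. monom (h i) (CARD('a) ^ i))"
  have poly_P: "{y. lin_poly K h y = 0} = {y. poly P y = 0}"
    unfolding P_def lin_poly_def by (simp add: poly_sum poly_monom)
  have "coeff P (CARD('a) ^ i0) = (\<Sum>i<K. if i = i0 then h i else 0)"
    unfolding P_def coeff_sum coeff_monom
    using two_le_card_field[where 'a='a] by (intro sum.cong) simp_all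
  then have "P \<noteq> 0" using assms by auto
  moreover have "degree P \<le> CARD('a) ^ (K - 1)"
    unfolding P_def
  proof (rule degree_sum_le)
    fix i assume "i \<in> {..<K}"
    then have "CARD('a) ^ i \<le> CARD('a) ^ (K - 1)"
      using two_le_card_field[where 'a='a] by (intro power_increasing) auto
    then show "degree (monom (h i) (CARD('a) ^ i)) \<le> CARD('a) ^ (K - 1)"
      using degree_monom_le le_trans by blast
  qed simp
  ultimately show "finite {y. lin_poly K h y = 0}"
    and "card {y. lin_poly K h y = 0} \<le> CARD('a) ^ (K - 1)"
    unfolding poly_P using poly_roots_finite card_poly_roots_bound le_trans by blast+
qed

section \<open>Lifted Gabidulin codes\<close>

lemma card_le_card_image_mult:
  assumes "finite A" "\<And>z. z \<in> f ` A \<Longrightarrow> card {x\<in>A. f x = z} \<le> b"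
  shows "card A \<le> card (f ` A) * b"
proof -
  have "A = (\<Union>z\<in>f ` A. {x\<in>A. f x = z})" by auto
  then have "card A \<le> (\<Sum>z\<in>f ` A. card {x\<in>A. f x = z})"
    using card_UN_le[of "f ` A" "\<lambda>z. {x\<in>A. f x = z}"] assms(1) by simp
  also have "\<dots> \<le> (\<Sum>z\<in>f ` A. b)" by (rule sum_mono) (rule assms(2))
  finally show ?thesis by simp
qed


text \<open>\<open>lifted_code h\<close> is the row space of \<open>[I\<^sub>k | M\<^sub>h]\<close>, where \<open>M\<^sub>h\<close> represents the map
  \<open>x \<mapsto> L\<^sub>h x\<close> truncated to \<open>n - k\<close> coordinates: the lifting of a Gabidulin codeword.\<close>

locale lifted_gabidulin = gf_ext_basis N bs for N and bs :: "'a::{finite,field} alg_closure list" +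
  fixes n k \<delta> K :: nat
  assumes k_le_N: "k \<le> N" and k_le_n: "k \<le> n"
    and dims: "(N - (n - k)) + (K - 1) + \<delta> = k"
begin

definition gabidulin_map :: "(nat \<Rightarrow> 'a alg_closure) \<Rightarrow> (nat \<Rightarrow> 'a) \<Rightarrow> nat \<Rightarrow> 'a" where
  "gabidulin_map h x j = (if j < n - k then coords (lin_poly K h (embed x)) j else 0)"

definition lift :: "(nat \<Rightarrow> 'a alg_closure) \<Rightarrow> (nat \<Rightarrow> 'a) \<Rightarrow> nat \<Rightarrow> 'a" where
  "lift h x i = (if i < k then x i else gabidulin_map h x (i - k))"

definition lifted_code :: "(nat \<Rightarrow> 'a alg_closure) \<Rightarrow> (nat \<Rightarrow> 'a) set" where
  "lifted_code h = lift h ` ambient k"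

definition shift :: "(nat \<Rightarrow> 'a) \<Rightarrow> nat \<Rightarrow> 'a" where
  "shift z i = (if i < k then 0 else z (i - k))"

lemma lin_poly_embed_in_gf_ext: "h \<in> {..<K} \<rightarrow> E \<Longrightarrow> lin_poly K h (embed x) \<in> E"
  by (rule lin_poly_in_gf_ext) (auto intro: embed_in_gf_ext)

lemma gabidulin_map_add:
  assumes "h \<in> {..<K} \<rightarrow> E"
  shows "gabidulin_map h (x + y) = gabidulin_map h x + gabidulin_map h y"
  using coords_add[OF lin_poly_embed_in_gf_ext[OF assms] lin_poly_embed_in_gf_ext[OF assms]]
  unfolding gabidulin_map_def by (auto simp: fun_eq_iff embed_add lin_poly_add)

lemma gabidulin_map_diff:
  assumes "h \<in> {..<K} \<rightarrow> E"
  shows "gabidulin_map h (x - y) = gabidulin_map h x - gabidulin_map h y"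
  using coords_diff[OF lin_poly_embed_in_gf_ext[OF assms] lin_poly_embed_in_gf_ext[OF assms]]
  unfolding gabidulin_map_def by (auto simp: fun_eq_iff embed_diff lin_poly_diff)

lemma gabidulin_map_fscale:
  assumes "h \<in> {..<K} \<rightarrow> E"
  shows "gabidulin_map h (fscale c x) = fscale c (gabidulin_map h x)"
proof -
  have "coords (lin_poly K h (embed (fscale c x))) = fscale c (coords (lin_poly K h (embed x)))"
    using coords_scale[OF lin_poly_embed_in_gf_ext[OF assms]]
    by (simp add: embed_fscale lin_poly_scale)
  then show ?thesis unfolding gabidulin_map_def by (auto simp: fun_eq_iff fscale_def)
qed

lemma gabidulin_map_diff_coeffs:
  assumes "g \<in> {..<K} \<rightarrow> E" "h \<in> {..<K} \<rightarrow> E"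
  shows "gabidulin_map (\<lambda>i. g i - h i) x = gabidulin_map g x - gabidulin_map h x"
  using coords_diff[OF lin_poly_embed_in_gf_ext[OF assms(1)] lin_poly_embed_in_gf_ext[OF assms(2)]]
  unfolding gabidulin_map_def by (auto simp: fun_eq_iff lin_poly_diff_coeffs)

lemma lift_in_ambient: "x \<in> ambient k \<Longrightarrow> lift h x \<in> ambient n"
  using k_le_n unfolding ambient_def lift_def gabidulin_map_def by auto

lemma lift_add: "h \<in> {..<K} \<rightarrow> E \<Longrightarrow> lift h (x + y) = lift h x + lift h y"
  unfolding lift_def by (auto simp: fun_eq_iff gabidulin_map_add)

lemma lift_fscale: "h \<in> {..<K} \<rightarrow> E \<Longrightarrow> lift h (fscale c x) = fscale c (lift h x)"
  using gabidulin_map_fscale[of h c x] unfolding lift_def fscale_def fun_eq_iff by auto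

lemma lift_zero: "h \<in> {..<K} \<rightarrow> E \<Longrightarrow> lift h 0 = 0"
  using lift_add[of h 0 0] by simp

lemma eq_if_agree_below_k:
  assumes "x \<in> ambient k" "y \<in> ambient k" "\<And>i. i < k \<Longrightarrow> x i = y i"
  shows "x = y"
proof
  fix i show "x i = y i"
    using assms unfolding ambient_def by (cases "i < k") auto
qed

lemma inj_on_lift: "inj_on (lift h) (ambient k)"
proof (rule inj_onI)
  fix x y assume "x \<in> ambient k" "y \<in> ambient k" and eq: "lift h x = lift h y"
  have "x i = y i" if "i < k" for i
    using fun_cong[OF eq, of i] that unfolding lift_def by simp
  with \<open>x \<in> ambient k\<close> \<open>y \<in> ambient k\<close> show "x = y" by (rule eq_if_agree_below_k)
qed

lemma lifted_code_is_k_subspace: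
  assumes "h \<in> {..<K} \<rightarrow> E"
  shows "is_k_subspace n k (lifted_code h)"
proof -
  interpret vector_space "fscale :: 'a \<Rightarrow> (nat \<Rightarrow> 'a) \<Rightarrow> _" by (rule vector_space_fscale)
  have sub: "lifted_code h \<subseteq> ambient n"
    unfolding lifted_code_def using lift_in_ambient by blast
  have "subspace (lifted_code h)"
    unfolding subspace_def lifted_code_def
  proof (intro conjI ballI allI)
    show "0 \<in> lift h ` ambient k"
      by (rule image_eqI[of _ _ 0]) (simp_all add: lift_zero[OF assms] zero_in_ambient)
    show "x + y \<in> lift h ` ambient k" if "x \<in> lift h ` ambient k" "y \<in> lift h ` ambient k" for x y
    proof -
      from that obtain a b where "a \<in> ambient k" "b \<in> ambient k" "x = lift h a" "y = lift h b"
        by blast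
      then show ?thesis
        by (intro image_eqI[of _ _ "a + b"]) (simp_all add: lift_add[OF assms] ambient_add)
    qed
    show "fscale c x \<in> lift h ` ambient k" if "x \<in> lift h ` ambient k" for c x
    proof -
      from that obtain a where "a \<in> ambient k" "x = lift h a" by blast
      then show ?thesis
        by (intro image_eqI[of _ _ "fscale c a"])
          (simp_all add: lift_fscale[OF assms] ambient_fscale)
    qed
  qed
  moreover have "card (lifted_code h) = CARD('a) ^ k"
    unfolding lifted_code_def using card_image[OF inj_on_lift] card_ambient by simp
  ultimately show ?thesis
    unfolding is_k_subspace_def using sub vdim_subspace by blast
qed

text \<open>The kernel of \<open>gabidulin_map d\<close> is mapped by \<open>lin_poly K d \<circ> embed\<close> into the subspace
  of \<open>E\<close> where the first \<open>n - k\<close> coordinates vanish, with fibres embedded in the roots of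
  \<open>lin_poly K d\<close>.\<close>

lemma card_gabidulin_kernel:
  assumes "d \<in> {..<K} \<rightarrow> E" "i0 < K" "d i0 \<noteq> 0"
  shows "card {x \<in> ambient k. gabidulin_map d x = 0} \<le> CARD('a) ^ (k - \<delta>)"
proof -
  define Ker where "Ker = {x \<in> ambient k. gabidulin_map d x = 0}"
  define g where "g x = lin_poly K d (embed x)" for x
  have Ker_sub: "Ker \<subseteq> ambient N"
    unfolding Ker_def using ambient_mono[OF k_le_N] by blast
  have "card (g ` Ker) \<le> card {e \<in> E. \<forall>j<n - k. coords e j = 0}"
  proof (rule card_mono)
    show "finite {e \<in> E. \<forall>j<n - k. coords e j = 0}" using finite_E by simp
    show "g ` Ker \<subseteq> {e \<in> E. \<forall>j<n - k. coords e j = 0}"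
      using lin_poly_embed_in_gf_ext[OF assms(1)]
      unfolding Ker_def g_def gabidulin_map_def by (auto simp: fun_eq_iff split: if_splits)
  qed
  also have "\<dots> \<le> CARD('a) ^ (N - (n - k))" by (rule card_coords_vanishing_below)
  finally have card_image: "card (g ` Ker) \<le> CARD('a) ^ (N - (n - k))" .
  have card_fibre: "card {x \<in> Ker. g x = z} \<le> CARD('a) ^ (K - 1)" if "z \<in> g ` Ker" for z
  proof -
    obtain x0 where x0: "x0 \<in> Ker" "g x0 = z" using \<open>z \<in> g ` Ker\<close> by blast
    have "inj_on (\<lambda>x. embed (x - x0)) {x \<in> Ker. g x = z}"
    proof (rule inj_onI)
      fix x x' assume "x \<in> {x \<in> Ker. g x = z}" "x' \<in> {x \<in> Ker. g x = z}"
        and "embed (x - x0) = embed (x' - x0)"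
      with x0 Ker_sub have "x - x0 = x' - x0"
        by (intro inj_onD[OF inj_on_embed]) (auto intro: ambient_diff)
      then show "x = x'" by simp
    qed
    moreover have "(\<lambda>x. embed (x - x0)) ` {x \<in> Ker. g x = z} \<subseteq> {y. lin_poly K d y = 0}"
      using x0 by (auto simp: g_def embed_diff lin_poly_diff)
    ultimately have "card {x \<in> Ker. g x = z} \<le> card {y. lin_poly K d y = 0}"
      using card_lin_poly_roots(1)[where h=d, OF assms(2,3)] by (rule card_inj_on_le)
    then show ?thesis using card_lin_poly_roots(2)[where h=d, OF assms(2,3)] by linarith
  qed
  have "finite Ker"
    unfolding Ker_def by (rule finite_subset[OF _ finite_ambient]) blast
  then have "card Ker \<le> card (g ` Ker) * CARD('a) ^ (K - 1)"
    using card_fibre by (rule card_le_card_image_mult)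
  also have "\<dots> \<le> CARD('a) ^ (N - (n - k)) * CARD('a) ^ (K - 1)"
    using card_image by simp
  also have "\<dots> = CARD('a) ^ (k - \<delta>)"
  proof -
    have "N - (n - k) + (K - 1) = k - \<delta>" using dims by linarith
    then show ?thesis by (simp flip: power_add)
  qed
  finally show ?thesis unfolding Ker_def .
qed

lemma card_gabidulin_image:
  assumes "d \<in> {..<K} \<rightarrow> E" "i0 < K" "d i0 \<noteq> 0"
  shows "CARD('a) ^ \<delta> \<le> card (gabidulin_map d ` ambient k)"
proof -
  let ?Ker = "{x \<in> ambient k. gabidulin_map d x = 0}"
  have "card (ambient k :: (nat \<Rightarrow> 'a) set) \<le> card (gabidulin_map d ` ambient k) * card ?Ker"
  proof (rule card_le_card_image_mult[OF finite_ambient])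
    fix z assume "z \<in> gabidulin_map d ` ambient k"
    then obtain x0 where x0: "x0 \<in> ambient k" "z = gabidulin_map d x0" by blast
    have "inj_on (\<lambda>x. x - x0) {x \<in> ambient k. gabidulin_map d x = z}" by (rule inj_onI) simp
    moreover have "(\<lambda>x. x - x0) ` {x \<in> ambient k. gabidulin_map d x = z} \<subseteq> ?Ker"
      using x0 by (auto simp: ambient_diff gabidulin_map_diff[OF assms(1)])
    moreover have "finite ?Ker" by (rule finite_subset[OF _ finite_ambient]) blast
    ultimately show "card {x \<in> ambient k. gabidulin_map d x = z} \<le> card ?Ker"
      by (rule card_inj_on_le)
  qed
  also have "\<dots> \<le> card (gabidulin_map d ` ambient k) * CARD('a) ^ (k - \<delta>)"
    using card_gabidulin_kernel[OF assms] by simp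
  finally have "CARD('a) ^ \<delta> * CARD('a) ^ (k - \<delta>) \<le>
      card (gabidulin_map d ` ambient k) * CARD('a) ^ (k - \<delta>)"
    using dims by (simp add: card_ambient flip: power_add)
  then show ?thesis by simp
qed

lemma shift_gabidulin_map_diff_coeffs:
  assumes "g \<in> {..<K} \<rightarrow> E" "h \<in> {..<K} \<rightarrow> E"
  shows "shift (gabidulin_map (\<lambda>i. g i - h i) y) = lift g y - lift h y"
  unfolding shift_def lift_def using gabidulin_map_diff_coeffs[OF assms] by (auto simp: fun_eq_iff)

lemma inj_on_lift_plus_shift: "inj_on (\<lambda>(x, z). lift h x + shift z) (ambient k \<times> Z)"
proof (rule inj_onI, clarify)
  fix x z x' z' assume x: "x \<in> ambient k" "x' \<in> ambient k"
    and eq: "lift h x + shift z = lift h x' + shift z'"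
  have "x i = x' i" if "i < k" for i
    using fun_cong[OF eq, of i] that unfolding lift_def shift_def by simp
  with x have "x = x'" by (rule eq_if_agree_below_k)
  moreover have "z j = z' j" for j
    using fun_cong[OF eq, of "j + k"] \<open>x = x'\<close> unfolding shift_def by simp
  ultimately show "x = x' \<and> z = z'" by auto
qed

text \<open>For \<open>g \<noteq> h\<close> the span of both lifted codes contains every \<open>lift h x + shift z\<close> with \<open>z\<close> in the
  image of \<open>gabidulin_map (g - h)\<close>; these are \<open>q\<^sup>k\<close> times at least \<open>q\<^sup>\<delta>\<close> distinct vectors.\<close>

lemma vdim_lifted_code_union:
  assumes g: "g \<in> {..<K} \<rightarrow> E" and h: "h \<in> {..<K} \<rightarrow> E" and "i0 < K" "g i0 \<noteq> h i0"
  shows "k + \<delta> \<le> vdim (lifted_code g \<union> lifted_code h)"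
proof -
  interpret vector_space "fscale :: 'a \<Rightarrow> (nat \<Rightarrow> 'a) \<Rightarrow> _" by (rule vector_space_fscale)
  let ?S = "lifted_code g \<union> lifted_code h"
  define d where "d i = g i - h i" for i
  have d: "d \<in> {..<K} \<rightarrow> E" using g h by (auto simp: d_def Pi_iff intro!: gf_ext_diff)
  define Im where "Im = gabidulin_map d ` ambient k"
  have card_Im: "CARD('a) ^ \<delta> \<le> card Im"
    unfolding Im_def using d \<open>i0 < K\<close> \<open>g i0 \<noteq> h i0\<close>
    by (intro card_gabidulin_image) (auto simp: d_def)
  define F where "F = (\<lambda>(x, z). lift h x + shift z)"
  have "card (F ` (ambient k \<times> Im)) = card (ambient k :: (nat \<Rightarrow> 'a) set) * card Im"
    using inj_on_lift_plus_shift unfolding F_def by (simp add: card_image card_cartesian_product)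
  then have card_F: "CARD('a) ^ (k + \<delta>) \<le> card (F ` (ambient k \<times> Im))"
    using card_Im by (simp add: card_ambient power_add)
  have "F (x, gabidulin_map d y) \<in> span ?S" if "x \<in> ambient k" "y \<in> ambient k" for x y
  proof -
    from that have "lift g y \<in> ?S" "lift h y \<in> ?S" "lift h x \<in> ?S"
      unfolding lifted_code_def by auto
    moreover have "F (x, gabidulin_map d y) = lift h x + (lift g y - lift h y)"
      using shift_gabidulin_map_diff_coeffs[OF g h] unfolding F_def d_def by simp
    ultimately show ?thesis by (simp add: span_add span_diff span_base)
  qed
  then have "F ` (ambient k \<times> Im) \<subseteq> span ?S"
    unfolding Im_def by auto
  moreover have "?S \<subseteq> ambient n"
    using lifted_code_is_k_subspace[OF g] lifted_code_is_k_subspace[OF h]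
    unfolding is_k_subspace_def by blast
  ultimately show ?thesis using card_F by (intro vdim_ge_if_card_ge) auto
qed

end

section \<open>The lower bound\<close>

lemma exists_lifted_gabidulin_family:
  assumes "0 < N" "k \<le> N" "k \<le> n" "N - (n - k) + (K - 1) + \<delta> = k"
  shows "\<exists>D :: nat \<Rightarrow> (nat \<Rightarrow> 'a::{finite,field}) set.
    (\<forall>i < CARD('a) ^ (N * K). is_k_subspace n k (D i)) \<and>
    (\<forall>i < CARD('a) ^ (N * K). \<forall>j < CARD('a) ^ (N * K). i \<noteq> j \<longrightarrow> k + \<delta> \<le> vdim (D i \<union> D j))"
proof -
  obtain bs :: "'a alg_closure list" where "gf_ext_basis N bs"
    using exists_gf_ext_basis[OF assms(1)] by blast
  with assms interpret lifted_gabidulin N bs n k \<delta> K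
    by (simp add: lifted_gabidulin_def lifted_gabidulin_axioms_def)
  define H where "H = PiE {..<K} (\<lambda>_. E)"
  have "finite H" unfolding H_def using finite_E by (simp add: finite_PiE)
  moreover have "card H = CARD('a) ^ (N * K)"
    unfolding H_def by (simp add: card_PiE card_gf_ext[OF assms(1)] power_mult)
  ultimately obtain enum where enum: "bij_betw enum {..<CARD('a) ^ (N * K)} H"
    by (metis ex_bij_betw_nat_finite lessThan_atLeast0)
  have enum_in: "enum i \<in> {..<K} \<rightarrow> E" if "i < CARD('a) ^ (N * K)" for i
    using bij_betw_apply[OF enum] that unfolding H_def by auto
  show ?thesis
  proof (intro exI[of _ "\<lambda>i. lifted_code (enum i)"] conjI allI impI)
    fix i assume "i < CARD('a) ^ (N * K)"
    then show "is_k_subspace n k (lifted_code (enum i))"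
      by (intro lifted_code_is_k_subspace enum_in)
  next
    fix i j assume ij: "i < CARD('a) ^ (N * K)" "j < CARD('a) ^ (N * K)" "i \<noteq> j"
    then have "enum i \<noteq> enum j"
      using bij_betw_imp_inj_on[OF enum] by (auto dest: inj_onD)
    moreover have "enum i \<in> H" "enum j \<in> H" using ij bij_betw_apply[OF enum] by auto
    ultimately obtain i0 where "i0 < K" "enum i i0 \<noteq> enum j i0"
      unfolding H_def by (metis PiE_ext lessThan_iff)
    then show "k + \<delta> \<le> vdim (lifted_code (enum i) \<union> lifted_code (enum j))"
      using ij by (intro vdim_lifted_code_union enum_in)
  qed
qed

lemma ex_div_ne_if_card_gt:
  fixes I :: "nat set"
  assumes "0 < a" "a < card I"
  shows "\<exists>i\<in>I. \<exists>j\<in>I. i div a \<noteq> j div a"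
proof (rule ccontr)
  assume "\<not> ?thesis"
  then have "inj_on (\<lambda>i. i mod a) I"
    by (intro inj_onI) (metis div_mult_mod_eq)
  moreover have "(\<lambda>i. i mod a) ` I \<subseteq> {..<a}" using assms(1) by auto
  ultimately have "card I \<le> card {..<a}" by (intro card_inj_on_le) auto
  with assms(2) show False by simp
qed

text \<open>Repeating each member \<open>\<alpha> - 1\<close> times is harmless: any \<open>\<alpha>\<close> indices hit two distinct members.\<close>

lemma covering_code_repeat:
  fixes D :: "nat \<Rightarrow> (nat \<Rightarrow> 'a::{finite,field}) set"
  assumes "2 \<le> \<alpha>" and subspace: "\<forall>i<M. is_k_subspace n k (D i)"
    and union: "\<forall>i<M. \<forall>j<M. i \<noteq> j \<longrightarrow> k + \<delta> \<le> vdim (D i \<union> D j)"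
  shows "covering_code n k \<delta> \<alpha> ((\<alpha> - 1) * M) (\<lambda>i. D (i div (\<alpha> - 1)))"
  unfolding covering_code_def
proof (intro conjI allI impI)
  have div_less: "i div (\<alpha> - 1) < M" if "i < (\<alpha> - 1) * M" for i
    using that assms(1) by (simp add: div_less_iff_less_mult mult.commute)
  then show "is_k_subspace n k (D (i div (\<alpha> - 1)))" if "i < (\<alpha> - 1) * M" for i
    using subspace that by blast
  fix I assume I: "I \<subseteq> {..<(\<alpha> - 1) * M} \<and> card I = \<alpha>"
  then obtain i j where ij: "i \<in> I" "j \<in> I" "i div (\<alpha> - 1) \<noteq> j div (\<alpha> - 1)"
    using ex_div_ne_if_card_gt[of "\<alpha> - 1" I] assms(1) by auto
  have "i div (\<alpha> - 1) < M" "j div (\<alpha> - 1) < M" using I ij div_less by auto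
  with ij(3) union have "k + \<delta> \<le> vdim (D (i div (\<alpha> - 1)) \<union> D (j div (\<alpha> - 1)))" by auto
  also have "\<dots> \<le> vdim (\<Union>i\<in>I. D (i div (\<alpha> - 1)))"
  proof (rule vdim_mono)
    show "D (i div (\<alpha> - 1)) \<union> D (j div (\<alpha> - 1)) \<subseteq> (\<Union>l\<in>I. D (l div (\<alpha> - 1)))"
      using ij(1,2) by (intro Un_least UN_upper)
    show "(\<Union>l\<in>I. D (l div (\<alpha> - 1))) \<subseteq> ambient n"
    proof (rule UN_least)
      fix l assume "l \<in> I"
      with I div_less have "l div (\<alpha> - 1) < M" by auto
      with subspace show "D (l div (\<alpha> - 1)) \<subseteq> ambient n"
        unfolding is_k_subspace_def by blast
    qed
  qed
  finally show "k + \<delta> \<le> vdim (\<Union>i\<in>I. D (i div (\<alpha> - 1)))" .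
qed

text \<open>Bounded because a code never contains the same subspace \<open>\<alpha>\<close> times.\<close>

lemma bdd_above_covering_code_sizes:
  assumes "1 \<le> \<delta>" "2 \<le> \<alpha>"
  shows "bdd_above {m. \<exists>C :: nat \<Rightarrow> (nat \<Rightarrow> 'a::{finite,field}) set. covering_code n k \<delta> \<alpha> m C}"
proof (rule bdd_aboveI)
  fix m assume "m \<in> {m. \<exists>C :: nat \<Rightarrow> (nat \<Rightarrow> 'a) set. covering_code n k \<delta> \<alpha> m C}"
  then obtain C :: "nat \<Rightarrow> (nat \<Rightarrow> 'a) set" where C: "covering_code n k \<delta> \<alpha> m C" by blast
  have fibre: "card {i \<in> {..<m}. C i = U} \<le> \<alpha> - 1" if "U \<in> C ` {..<m}" for U
  proof (rule ccontr)
    assume "\<not> ?thesis"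
    then have "\<alpha> \<le> card {i \<in> {..<m}. C i = U}" by simp
    then obtain I where I: "I \<subseteq> {i \<in> {..<m}. C i = U}" "card I = \<alpha>"
      by (rule obtain_subset_with_card_n)
    then have "k + \<delta> \<le> vdim (\<Union>i\<in>I. C i)"
      using C unfolding covering_code_def by auto
    moreover have "I \<noteq> {}" using I(2) assms(2) by auto
    with I(1) have "(\<Union>i\<in>I. C i) = U" by auto
    moreover have "vdim U = k"
      using that C unfolding covering_code_def is_k_subspace_def by auto
    ultimately show False using assms(1) by simp
  qed
  have "m \<le> card (C ` {..<m}) * (\<alpha> - 1)"
    using card_le_card_image_mult[of "{..<m}" C "\<alpha> - 1"] fibre by simp
  also have "card (C ` {..<m}) \<le> card (Pow (ambient n :: (nat \<Rightarrow> 'a) set))"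
    using C finite_ambient unfolding covering_code_def is_k_subspace_def
    by (intro card_mono) auto
  finally show "m \<le> card (Pow (ambient n :: (nat \<Rightarrow> 'a) set)) * (\<alpha> - 1)" by simp
qed

lemma le_B_q:
  assumes "covering_code n k \<delta> \<alpha> m (C :: nat \<Rightarrow> (nat \<Rightarrow> 'a::{finite,field}) set)" "1 \<le> \<delta>" "2 \<le> \<alpha>"
  shows "m \<le> B_q TYPE('a) n k \<delta> \<alpha>"
  unfolding B_q_def
  by (rule cSup_upper) (use assms bdd_above_covering_code_sizes[where 'a='a] in auto)

theorem mainTheorem14:
  fixes n k \<delta> \<alpha> :: nat
  assumes "1 \<le> \<delta>" and "\<delta> \<le> k" and "\<delta> + k \<le> n" and "\<alpha> \<ge> 2"
  shows "B_q TYPE('a::{finite,field}) n k \<delta> \<alpha> \<ge>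
           (\<alpha> - 1) * CARD('a) ^ (max k (n - k) * (min k (n - k) - \<delta> + 1))"
proof -
  define N K where "N = max k (n - k)" and "K = min k (n - k) - \<delta> + 1"
  have "0 < N" "k \<le> N" "k \<le> n" "N - (n - k) + (K - 1) + \<delta> = k"
    using assms by (auto simp: N_def K_def)
  then obtain D :: "nat \<Rightarrow> (nat \<Rightarrow> 'a) set" where
    "\<forall>i < CARD('a) ^ (N * K). is_k_subspace n k (D i)"
    "\<forall>i < CARD('a) ^ (N * K). \<forall>j < CARD('a) ^ (N * K). i \<noteq> j \<longrightarrow> k + \<delta> \<le> vdim (D i \<union> D j)"
    by (metis exists_lifted_gabidulin_family)
  then have "covering_code n k \<delta> \<alpha> ((\<alpha> - 1) * CARD('a) ^ (N * K)) (\<lambda>i. D (i div (\<alpha> - 1)))"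
    using assms(4) by (intro covering_code_repeat)
  then show ?thesis
    unfolding N_def K_def using le_B_q assms(1,4) by blast
qed

end
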